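(* Let $n\ge2$, $d\ge 3$, $\vec r$ a weight vector and $f\in M_{\ge0}(\vec r)$ nonzero. Then the coefficient of $x_n^d$ in $f$ is zero, so $f=\sum_{j=1}^{d}x_n^{d-j}h_j(x_0,\dots,x_{n-1})$ with $h_j$ homogeneous of degree $j$; write $q=h_2$, a quadratic form in $x_0,\dots,x_{n-1}$. Let $m_0$ be the smallest integer with $m_0>\frac{2(n+1)}{d}-1$. Then $\operatorname{rank}(q)\le m_0$. If $f\in M_{>0}(\vec r)$, the same conclusion holds with $m_0$ the smallest integer with $m_0\ge\frac{2(n+1)}{d}-1$.
   Context: A weight vector is $\vec r=(r_0,\dots,r_n)\in\mathbb{Z}^{n+1}$ with $r_0\ge r_1\ge\cdots\ge r_n$, $\vec r\neq\vec 0$ and $\sum_j r_j=0$. $M_{\ge0}(\vec r)$ (resp. $M_{>0}(\vec r)$) is the set of $f=\sum a_{i_0,\dots,i_n}x_0^{i_0}\cdots x_n^{i_n}\in\mathbb{C}[x_0,\dots,x_n]_d$ such that $\sum_j r_ji_j\ge 0$ (resp. $>0$) for every $(i_0,\dots,i_n)$ with $a_{i_0,\dots,i_n}\neq0$. The rank of a quadratic form $q=\sum_{i,j}a_{ij}x_ix_j$ ($a_{ij}=a_{ji}$) is the rank of the symmetric matrix $(a_{ij})$. *)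

theory Defs
  imports Complex_Main "Jordan_Normal_Form.DL_Rank"
begin

text \<open>A form of degree d in the variables x_0,...,x_n is represented by its coefficient
  function on exponent vectors alpha :: nat => nat (alpha j = exponent of x_j).\<close>

definition is_monomial_exp :: "nat \<Rightarrow> nat \<Rightarrow> (nat \<Rightarrow> nat) \<Rightarrow> bool" where
  "is_monomial_exp n d \<alpha> \<longleftrightarrow> (\<forall>j>n. \<alpha> j = 0) \<and> (\<Sum>j\<le>n. \<alpha> j) = d"

definition homog_form :: "nat \<Rightarrow> nat \<Rightarrow> ((nat \<Rightarrow> nat) \<Rightarrow> complex) \<Rightarrow> bool" where
  "homog_form n d f \<longleftrightarrow> (\<forall>\<alpha>. f \<alpha> \<noteq> 0 \<longrightarrow> is_monomial_exp n d \<alpha>)"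

definition weight_vector :: "nat \<Rightarrow> (nat \<Rightarrow> int) \<Rightarrow> bool" where
  "weight_vector n r \<longleftrightarrow> (\<forall>i<n. r (Suc i) \<le> r i) \<and> (\<exists>j\<le>n. r j \<noteq> 0) \<and> (\<Sum>j\<le>n. r j) = 0"

definition M_ge0 :: "nat \<Rightarrow> nat \<Rightarrow> (nat \<Rightarrow> int) \<Rightarrow> ((nat \<Rightarrow> nat) \<Rightarrow> complex) \<Rightarrow> bool" where
  "M_ge0 n d r f \<longleftrightarrow> homog_form n d f \<and> (\<forall>\<alpha>. f \<alpha> \<noteq> 0 \<longrightarrow> (\<Sum>j\<le>n. r j * int (\<alpha> j)) \<ge> 0)"

definition M_gt0 :: "nat \<Rightarrow> nat \<Rightarrow> (nat \<Rightarrow> int) \<Rightarrow> ((nat \<Rightarrow> nat) \<Rightarrow> complex) \<Rightarrow> bool" where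
  "M_gt0 n d r f \<longleftrightarrow> homog_form n d f \<and> (\<forall>\<alpha>. f \<alpha> \<noteq> 0 \<longrightarrow> (\<Sum>j\<le>n. r j * int (\<alpha> j)) > 0)"

definition pure_power :: "nat \<Rightarrow> nat \<Rightarrow> nat \<Rightarrow> nat" where
  "pure_power n d = (\<lambda>k. if k = n then d else 0)"

definition quad_exp :: "nat \<Rightarrow> nat \<Rightarrow> nat \<Rightarrow> nat \<Rightarrow> nat \<Rightarrow> nat" where
  "quad_exp n d i j = (\<lambda>k. (if k = i then 1 else 0) + (if k = j then 1 else 0) + (if k = n then d - 2 else 0))"

text \<open>Symmetric n x n matrix (a_ij), i,j in {0..n-1}, of q = h_2 = sum a_ij x_i x_j,
  where h_2 is the coefficient of x_n^(d-2) in f.\<close>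
definition h2_matrix :: "nat \<Rightarrow> nat \<Rightarrow> ((nat \<Rightarrow> nat) \<Rightarrow> complex) \<Rightarrow> complex mat" where
  "h2_matrix n d f = mat n n (\<lambda>(i, j). if i = j then f (quad_exp n d i i) else f (quad_exp n d i j) / 2)"

definition quad_rank :: "nat \<Rightarrow> nat \<Rightarrow> ((nat \<Rightarrow> nat) \<Rightarrow> complex) \<Rightarrow> nat" where
  "quad_rank n d f = vec_space.rank n (h2_matrix n d f)"

end

theory Submission imports Defs begin

text \<open>Since r is decreasing with sum 0, its last entry r n is negative. Hence x_n^d has negative
  weight, and x_a x_b x_n^(d-2) can occur in f only if r a + r b \<ge> c := (d - 2) (- r n).
  If r i + r (s - i) < c for some i \<le> s, monotonicity makes the block a \<ge> i, b \<ge> s - i of q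
  vanish, so rank q \<le> s. Taking s maximal with r i + r (s - 1 - i) \<ge> c for all i < s and
  summing over i gives s c \<le> 2 (r 0 + ... + r (s - 1)) \<le> 2 (n + 1 - s) (- r n), i.e. s d \<le> 2 (n + 1).
  Strict positivity raises the threshold by one, which makes this inequality strict.\<close>

lemma rank_le_rank_clear_row:
  fixes A :: "'a::field mat"
  assumes A: "A \<in> carrier_mat n nc"
  shows "vec_space.rank n A \<le> vec_space.rank n (mat n nc (\<lambda>(a, b). if a = i then 0 else A $$ (a, b))) + 1"
proof -
  define B where "B = mat n nc (\<lambda>(a, b). if a = i then 0 else A $$ (a, b))"
  define R where "R = mat n nc (\<lambda>(a, b). if a = i then A $$ (a, b) else 0)"
  have "A = B + R" using A by (intro eq_matI) (auto simp: B_def R_def)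
  moreover have "vec_space.rank n R \<le> 1"
    by (rule vec_space.rank_le_1_product_entries[where f = "\<lambda>a. if a = i then 1 else 0" and g = "\<lambda>b. A $$ (i, b)"])
      (auto simp: R_def)
  ultimately show ?thesis
    using vec_space.rank_subadditive[of B n nc R] unfolding B_def R_def by auto
qed

lemma rank_le_rank_clear_col:
  fixes A :: "'a::field mat"
  assumes A: "A \<in> carrier_mat n nc"
  shows "vec_space.rank n A \<le> vec_space.rank n (mat n nc (\<lambda>(a, b). if b = k then 0 else A $$ (a, b))) + 1"
proof -
  define B where "B = mat n nc (\<lambda>(a, b). if b = k then 0 else A $$ (a, b))"
  define C where "C = mat n nc (\<lambda>(a, b). if b = k then A $$ (a, b) else 0)"
  have "A = B + C" using A by (intro eq_matI) (auto simp: B_def C_def)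
  moreover have "vec_space.rank n C \<le> 1"
    by (rule vec_space.rank_le_1_product_entries[where f = "\<lambda>a. A $$ (a, k)" and g = "\<lambda>b. if b = k then 1 else 0"])
      (auto simp: C_def)
  ultimately show ?thesis
    using vec_space.rank_subadditive[of B n nc C] unfolding B_def C_def by auto
qed

lemma rank_le_of_zero_cols:
  fixes A :: "'a::field mat"
  assumes "A \<in> carrier_mat n nc" "\<And>a b. a < n \<Longrightarrow> b < nc \<Longrightarrow> k \<le> b \<Longrightarrow> A $$ (a, b) = 0"
  shows "vec_space.rank n A \<le> k"
  using assms
proof (induction k arbitrary: A)
  case 0
  then have "A = 0\<^sub>m n nc" by (intro eq_matI) auto
  then show ?case using vec_space.rank_0I by simp
next
  case (Suc k)
  have "vec_space.rank n (mat n nc (\<lambda>(a, b). if b = k then 0 else A $$ (a, b))) \<le> k"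
    by (rule Suc.IH) (use Suc.prems in auto)
  then show ?case using rank_le_rank_clear_col[OF Suc.prems(1), of k] by simp
qed

lemma rank_le_of_zero_block:
  fixes A :: "'a::field mat"
  assumes "A \<in> carrier_mat n nc"
    and "\<And>a b. a < n \<Longrightarrow> b < nc \<Longrightarrow> i \<le> a \<Longrightarrow> k \<le> b \<Longrightarrow> A $$ (a, b) = 0"
  shows "vec_space.rank n A \<le> i + k"
  using assms
proof (induction i arbitrary: A)
  case 0
  then show ?case using rank_le_of_zero_cols[of A n nc k] by simp
next
  case (Suc i)
  have "vec_space.rank n (mat n nc (\<lambda>(a, b). if a = i then 0 else A $$ (a, b))) \<le> i + k"
    by (rule Suc.IH) (use Suc.prems in auto)
  then show ?case using rank_le_rank_clear_row[OF Suc.prems(1), of i] by simp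
qed

lemma rank_le_of_weight_pair_below:
  fixes A :: "'a::field mat" and r :: "nat \<Rightarrow> int"
  assumes A: "A \<in> carrier_mat n n"
    and r_antimono: "\<And>i j. i \<le> j \<Longrightarrow> j < n \<Longrightarrow> r j \<le> r i"
    and support: "\<And>a b. a < n \<Longrightarrow> b < n \<Longrightarrow> A $$ (a, b) \<noteq> 0 \<Longrightarrow> c \<le> r a + r b"
    and "i \<le> s" "s < n" "r i + r (s - i) < c"
  shows "vec_space.rank n A \<le> s"
proof -
  have "vec_space.rank n A \<le> i + (s - i)"
  proof (rule rank_le_of_zero_block[OF A])
    fix a b assume "a < n" "b < n" "i \<le> a" "s - i \<le> b"
    then have "r a + r b < c"
      using r_antimono[of i a] r_antimono[of "s - i" b] \<open>r i + r (s - i) < c\<close> by linarith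
    then show "A $$ (a, b) = 0" using support \<open>a < n\<close> \<open>b < n\<close> by force
  qed
  then show ?thesis using \<open>i \<le> s\<close> by simp
qed

lemma rank_le_of_weighted_support:
  fixes A :: "'a::field mat" and r :: "nat \<Rightarrow> int"
  assumes A: "A \<in> carrier_mat n n"
    and r_antimono: "\<And>i j. i \<le> j \<Longrightarrow> j < n \<Longrightarrow> r j \<le> r i"
    and support: "\<And>a b. a < n \<Longrightarrow> b < n \<Longrightarrow> A $$ (a, b) \<noteq> 0 \<Longrightarrow> c \<le> r a + r b"
  shows "\<exists>s\<le>n. vec_space.rank n A \<le> s \<and> int s * c \<le> 2 * (\<Sum>i<s. r i)"
proof -
  define S where "S = {s. s \<le> n \<and> (\<forall>i<s. c \<le> r i + r (s - Suc i))}"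
  have "finite S" "0 \<in> S" unfolding S_def by auto
  define s where "s = Max S"
  have "s \<in> S" unfolding s_def using \<open>finite S\<close> \<open>0 \<in> S\<close> Max_in by blast
  then have "s \<le> n" and pairs: "\<And>i. i < s \<Longrightarrow> c \<le> r i + r (s - Suc i)"
    unfolding S_def by auto
  have "vec_space.rank n A \<le> s"
  proof (cases "s = n")
    case True
    then show ?thesis using vec_space.rank_le_nc[OF A] by simp
  next
    case False
    then have "s < n" using \<open>s \<le> n\<close> by simp
    have "Suc s \<notin> S" using Max_ge[OF \<open>finite S\<close>] unfolding s_def by fastforce
    then obtain i where "i \<le> s" "r i + r (s - i) < c"
      using \<open>s < n\<close> unfolding S_def by (auto simp: not_le less_Suc_eq_le)
    then show ?thesis
      using rank_le_of_weight_pair_below[where r = r and c = c, OF A r_antimono support] \<open>s < n\<close>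
      by blast
  qed
  moreover have "int s * c \<le> 2 * (\<Sum>i<s. r i)"
  proof -
    have "int s * c = (\<Sum>i<s. c)" by simp
    also have "\<dots> \<le> (\<Sum>i<s. r i + r (s - Suc i))" by (rule sum_mono) (simp add: pairs)
    also have "\<dots> = 2 * (\<Sum>i<s. r i)"
      by (simp add: sum.distrib sum.nat_diff_reindex)
    finally show ?thesis .
  qed
  ultimately show ?thesis using \<open>s \<le> n\<close> by blast
qed

lemma weight_vector_antimono:
  assumes "weight_vector n r" "i \<le> j" "j \<le> n"
  shows "r j \<le> r i"
  using assms(2,3)
proof (induction j rule: dec_induct)
  case base
  then show ?case by simp
next
  case (step k)
  then have "r (Suc k) \<le> r k" using assms(1) unfolding weight_vector_def by simp
  then show ?case using step by simp
qed

lemma weight_vector_last_neg: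
  assumes "weight_vector n r"
  shows "r n < 0"
proof (rule ccontr)
  assume "\<not> r n < 0"
  then have "\<forall>j\<in>{..n}. 0 \<le> r j" using weight_vector_antimono[OF assms] by force
  then have "\<forall>j\<in>{..n}. r j = 0"
    using assms sum_nonneg_eq_0_iff[of "{..n}" r] unfolding weight_vector_def by auto
  then show False using assms unfolding weight_vector_def by auto
qed

lemma weight_vector_sum_lessThan_le:
  assumes "weight_vector n r" "s \<le> n + 1"
  shows "(\<Sum>i<s. r i) \<le> int (n + 1 - s) * - r n"
proof -
  have "{..n} = {..<s} \<union> {s..n}" using assms(2) by auto
  then have "0 = (\<Sum>i<s. r i) + (\<Sum>j\<in>{s..n}. r j)"
    using assms(1) unfolding weight_vector_def by (simp add: sum.union_disjoint ivl_disj_int)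
  moreover have "int (n + 1 - s) * r n \<le> (\<Sum>j\<in>{s..n}. r j)"
    using sum_mono[of "{s..n}" "\<lambda>_. r n" r] weight_vector_antimono[OF assms(1)] by simp
  ultimately show ?thesis by simp
qed

lemma weighted_degree_pure_power: "(\<Sum>j\<le>n. r j * int (pure_power n d j)) = int d * r n"
  unfolding pure_power_def by (simp add: if_distrib cong: if_cong)

lemma weighted_degree_quad_exp:
  assumes "a < n" "b < n"
  shows "(\<Sum>j\<le>n. r j * int (quad_exp n d a b j)) = r a + r b + int (d - 2) * r n"
proof -
  have "(\<Sum>j\<le>n. r j * int (quad_exp n d a b j))
      = (\<Sum>j\<le>n. (if j = a then r j else 0) + (if j = b then r j else 0)
                  + (if j = n then int (d - 2) * r j else 0))"
    by (rule sum.cong) (auto simp: quad_exp_def algebra_simps)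
  also have "\<dots> = r a + r b + int (d - 2) * r n"
    using assms by (simp add: sum.distrib)
  finally show ?thesis .
qed

lemma h2_matrix_carrier: "h2_matrix n d f \<in> carrier_mat n n"
  unfolding h2_matrix_def by simp

lemma h2_matrix_nonzero:
  assumes "a < n" "b < n" "h2_matrix n d f $$ (a, b) \<noteq> 0"
  shows "f (quad_exp n d a b) \<noteq> 0"
  using assms unfolding h2_matrix_def by (auto split: if_splits)

lemma quad_rank_weighted_bound:
  assumes r: "weight_vector n r" and "2 \<le> d" "0 \<le> k"
    and weight: "\<And>\<alpha>. f \<alpha> \<noteq> 0 \<Longrightarrow> k \<le> (\<Sum>j\<le>n. r j * int (\<alpha> j))"
  shows "int (quad_rank n d f) * (int d * - r n + k) \<le> int (2 * (n + 1)) * - r n"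
proof -
  define c where "c = k + int (d - 2) * - r n"
  have "\<exists>s\<le>n. vec_space.rank n (h2_matrix n d f) \<le> s \<and> int s * c \<le> 2 * (\<Sum>i<s. r i)"
  proof (rule rank_le_of_weighted_support[OF h2_matrix_carrier])
    show "\<And>i j. i \<le> j \<Longrightarrow> j < n \<Longrightarrow> r j \<le> r i" using weight_vector_antimono[OF r] by simp
    fix a b assume "a < n" "b < n" "h2_matrix n d f $$ (a, b) \<noteq> 0"
    then show "c \<le> r a + r b"
      using weight[OF h2_matrix_nonzero] weighted_degree_quad_exp unfolding c_def by fastforce
  qed
  then obtain s where "s \<le> n" "quad_rank n d f \<le> s" and "int s * c \<le> 2 * (\<Sum>i<s. r i)"
    unfolding quad_rank_def by blast
  then have "int s * c \<le> 2 * (int (n + 1 - s) * - r n)"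
    using weight_vector_sum_lessThan_le[OF r, of s] by simp
  then have "int s * (int d * - r n + k) \<le> int (2 * (n + 1)) * - r n"
    using \<open>s \<le> n\<close> \<open>2 \<le> d\<close> unfolding c_def by (simp add: of_nat_diff algebra_simps)
  moreover have "0 \<le> int d * - r n"
    using weight_vector_last_neg[OF r] by (intro mult_nonneg_nonneg) auto
  ultimately show ?thesis
    using \<open>quad_rank n d f \<le> s\<close> \<open>0 \<le> k\<close>
    by (meson add_nonneg_nonneg mult_right_mono of_nat_le_iff order_trans)
qed

lemma M_ge0_quad_rank_le:
  assumes r: "weight_vector n r" and "2 \<le> d" "M_ge0 n d r f"
  shows "quad_rank n d f * d \<le> 2 * (n + 1)"
proof -
  have "int (quad_rank n d f * d) * - r n \<le> int (2 * (n + 1)) * - r n"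
    using quad_rank_weighted_bound[OF r \<open>2 \<le> d\<close>, of 0 f] \<open>M_ge0 n d r f\<close>
    unfolding M_ge0_def by (simp add: ac_simps)
  then have "int (quad_rank n d f * d) \<le> int (2 * (n + 1))"
    using weight_vector_last_neg[OF r] by (simp only: mult_le_cancel_right_pos neg_0_less_iff_less)
  then show ?thesis by (simp only: of_nat_le_iff)
qed

lemma M_gt0_quad_rank_less:
  assumes r: "weight_vector n r" and "2 \<le> d" "M_gt0 n d r f"
  shows "quad_rank n d f * d < 2 * (n + 1)"
proof -
  have "\<And>\<alpha>. f \<alpha> \<noteq> 0 \<Longrightarrow> 1 \<le> (\<Sum>j\<le>n. r j * int (\<alpha> j))"
    using \<open>M_gt0 n d r f\<close> unfolding M_gt0_def by fastforce
  then have "int (quad_rank n d f * d) * - r n + int (quad_rank n d f) \<le> int (2 * (n + 1)) * - r n"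
    using quad_rank_weighted_bound[OF r \<open>2 \<le> d\<close>, of 1 f] by (simp add: algebra_simps)
  then have "int (quad_rank n d f * d) * - r n < int (2 * (n + 1)) * - r n \<or> quad_rank n d f = 0"
    by linarith
  then have "int (quad_rank n d f * d) < int (2 * (n + 1))"
    using weight_vector_last_neg[OF r] by (auto simp: mult_less_cancel_right_pos)
  then show ?thesis by (simp only: of_nat_less_iff)
qed

lemma M_ge0_pure_power_eq_0:
  assumes "weight_vector n r" "0 < d" "M_ge0 n d r f"
  shows "f (pure_power n d) = 0"
proof (rule ccontr)
  assume "f (pure_power n d) \<noteq> 0"
  then have "0 \<le> int d * r n"
    using assms(3) weighted_degree_pure_power unfolding M_ge0_def by metis
  then show False using weight_vector_last_neg[OF assms(1)] \<open>0 < d\<close> by (simp add: zero_le_mult_iff)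
qed

theorem lemma5p1:
  fixes n d :: nat and r :: "nat \<Rightarrow> int" and f :: "(nat \<Rightarrow> nat) \<Rightarrow> complex"
  assumes "n \<ge> 2" and "d \<ge> 3"
    and "weight_vector n r"
    and "M_ge0 n d r f"
    and "f \<noteq> (\<lambda>_. 0)"
  shows "f (pure_power n d) = 0
    \<and> int (quad_rank n d f) \<le> \<lfloor>2 * real (n + 1) / real d - 1\<rfloor> + 1
    \<and> (M_gt0 n d r f \<longrightarrow> int (quad_rank n d f) \<le> \<lceil>2 * real (n + 1) / real d - 1\<rceil>)"
proof -
  have d: "2 \<le> d" "0 < real d" using \<open>d \<ge> 3\<close> by auto
  have "real (quad_rank n d f) \<le> 2 * real (n + 1) / real d"
    using M_ge0_quad_rank_le[OF assms(3) d(1) assms(4)] d(2)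
    by (simp add: pos_le_divide_eq flip: of_nat_mult of_nat_le_iff)
  then have "int (quad_rank n d f) \<le> \<lfloor>2 * real (n + 1) / real d - 1\<rfloor> + 1"
    by (simp add: le_floor_iff)
  moreover have "int (quad_rank n d f) \<le> \<lceil>2 * real (n + 1) / real d - 1\<rceil>" if "M_gt0 n d r f"
  proof -
    have "real (quad_rank n d f) < 2 * real (n + 1) / real d"
      using M_gt0_quad_rank_less[OF assms(3) d(1) that] d(2)
      by (simp add: pos_less_divide_eq flip: of_nat_mult of_nat_less_iff)
    then show ?thesis by (simp add: le_ceiling_iff less_ceiling_iff)
  qed
  ultimately show ?thesis using M_ge0_pure_power_eq_0[OF assms(3) _ assms(4)] d by auto
qed

end
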